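(* Let $H=\ell^2(\mathbb{N})$ with its standard orthonormal basis, $K(H)$ the compact operators on $H$ represented by infinite matrices, and let $A=(a_{ij})\in\ell^\infty(\mathbb{N}^2)$ be such that $S_A(T)=A\circ T$ is a nonzero map $S_A\colon K(H)\to K(H)$. Then $S_A$ is multiplicative (i.e. $S_A(BC)=S_A(B)S_A(C)$ for all $B,C\in K(H)$) if and only if every column of $A$ is a scalar multiple of the first column of $A$ and $a_{ii}=1$ for all $i$.
   Context: $A\circ T$ is the entrywise product of $A$ with the matrix of $T$; $\ell^\infty(\mathbb{N}^2)$ denotes infinite matrices with uniformly bounded entries. *)

theory Defs
  imports Complex_Main
begin

text \<open>The standard orthonormal basis is
e_j = indicator of j, so an operator T on H is represented by the infinite matrix
t i j = <T e_j, e_i>, and (T x) i = sum_j t i j * x j.\<close>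

definition l2 :: "(nat \<Rightarrow> complex) set" where
  "l2 = {x. summable (\<lambda>i. (cmod (x i))^2)}"

definition l2norm :: "(nat \<Rightarrow> complex) \<Rightarrow> real" where
  "l2norm x = sqrt (\<Sum>i. (cmod (x i))^2)"

definition matvec :: "(nat \<Rightarrow> nat \<Rightarrow> complex) \<Rightarrow> (nat \<Rightarrow> complex) \<Rightarrow> nat \<Rightarrow> complex" where
  "matvec T x = (\<lambda>i. \<Sum>j. T i j * x j)"

definition bounded_matrix :: "(nat \<Rightarrow> nat \<Rightarrow> complex) \<Rightarrow> bool" where
  "bounded_matrix T \<longleftrightarrow>
     (\<forall>x\<in>l2. (\<forall>i. summable (\<lambda>j. T i j * x j)) \<and> matvec T x \<in> l2) \<and>
     (\<exists>C. \<forall>x\<in>l2. l2norm (matvec T x) \<le> C * l2norm x)"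

text \<open>Matrix of a compact operator on l2: bounded, and the image of every sequence in
the closed unit ball has a Cauchy (hence, l2 being complete, convergent) subsequence.\<close>
definition compact_matrix :: "(nat \<Rightarrow> nat \<Rightarrow> complex) \<Rightarrow> bool" where
  "compact_matrix T \<longleftrightarrow> bounded_matrix T \<and>
     (\<forall>s::nat \<Rightarrow> nat \<Rightarrow> complex. (\<forall>n. s n \<in> l2 \<and> l2norm (s n) \<le> 1) \<longrightarrow>
        (\<exists>r::nat \<Rightarrow> nat. strict_mono r \<and>
           (\<forall>e>0. \<exists>N. \<forall>m\<ge>N. \<forall>n\<ge>N.
              l2norm (\<lambda>i. matvec T (s (r m)) i - matvec T (s (r n)) i) < e)))"

definition KH :: "(nat \<Rightarrow> nat \<Rightarrow> complex) set" where
  "KH = {T. compact_matrix T}"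

definition matmul :: "(nat \<Rightarrow> nat \<Rightarrow> complex) \<Rightarrow> (nat \<Rightarrow> nat \<Rightarrow> complex) \<Rightarrow> nat \<Rightarrow> nat \<Rightarrow> complex" where
  "matmul B C = (\<lambda>i j. \<Sum>k. B i k * C k j)"

definition schur :: "(nat \<Rightarrow> nat \<Rightarrow> complex) \<Rightarrow> (nat \<Rightarrow> nat \<Rightarrow> complex) \<Rightarrow> nat \<Rightarrow> nat \<Rightarrow> complex" where
  "schur A T = (\<lambda>i j. A i j * T i j)"

end

theory Submission
  imports Defs "HOL-Analysis.Analysis"
begin

text \<open>Testing multiplicativity on matrix units \<open>E\<^sub>i\<^sub>k E\<^sub>k\<^sub>j = E\<^sub>i\<^sub>j\<close>, which are compact,
  yields the cocycle identity \<open>a\<^sub>i\<^sub>j = a\<^sub>i\<^sub>k a\<^sub>k\<^sub>j\<close>. Since \<open>A \<noteq> 0\<close> it forces \<open>a\<^sub>0\<^sub>0 = 1\<close>, and then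
  \<open>a\<^sub>i\<^sub>j = a\<^sub>0\<^sub>j a\<^sub>i\<^sub>0\<close> with \<open>a\<^sub>i\<^sub>i = 1\<close>. Conversely, the cocycle identity follows from
  proportional columns and unit diagonal, and it lets \<open>a\<^sub>i\<^sub>j\<close> be pulled out of the
  \<open>(i,j)\<close> entry \<open>\<Sum>\<^sub>k a\<^sub>i\<^sub>k b\<^sub>i\<^sub>k a\<^sub>k\<^sub>j c\<^sub>k\<^sub>j\<close> of \<open>S\<^sub>A(B) S\<^sub>A(C)\<close>; that series converges because
  the \<open>j\<close>-th column of \<open>C\<close> lies in \<open>\<ell>\<^sup>2\<close> and \<open>B\<close> acts on \<open>\<ell>\<^sup>2\<close>.\<close>

definition matrix_unit :: "nat \<Rightarrow> nat \<Rightarrow> nat \<Rightarrow> nat \<Rightarrow> complex" where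
  "matrix_unit p q = (\<lambda>i j. if i = p \<and> j = q then 1 else 0)"

lemma suminf_single: "(\<Sum>r. if r = i then c else (0::'a::{t2_space,comm_monoid_add})) = c"
  using sums_unique[OF sums_single[of i "\<lambda>_. c"]] by simp

lemma summable_single: "summable (\<lambda>r. if r = i then c else (0::'a::{t2_space,comm_monoid_add}))"
  using sums_single[of i "\<lambda>_. c"] summable_def by blast

lemma cmod_single_square: "(\<lambda>i. (cmod (if i = p then c else 0))\<^sup>2) = (\<lambda>i. if i = p then (cmod c)\<^sup>2 else 0)"
  by auto

lemma l2norm_single: "l2norm (\<lambda>i. if i = p then c else 0) = cmod c"
  unfolding l2norm_def cmod_single_square by (simp add: suminf_single)

lemma single_in_l2: "(\<lambda>i. if i = p then c else 0) \<in> l2"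
  unfolding l2_def mem_Collect_eq cmod_single_square by (rule summable_single)

lemma cmod_le_l2norm:
  assumes "x \<in> l2"
  shows "cmod (x q) \<le> l2norm x"
proof -
  have "summable (\<lambda>i. (cmod (x i))\<^sup>2)" using assms l2_def by auto
  then have "(\<Sum>i\<in>{q}. (cmod (x i))\<^sup>2) \<le> (\<Sum>i. (cmod (x i))\<^sup>2)"
    by (rule sum_le_suminf) auto
  then have "sqrt ((cmod (x q))\<^sup>2) \<le> l2norm x"
    unfolding l2norm_def using real_sqrt_le_mono by fastforce
  then show ?thesis by simp
qed

lemma matrix_unit_row:
  "(\<lambda>j. matrix_unit p q i j * x j) = (\<lambda>j. if j = q then (if i = p then x q else 0) else 0)"
  by (auto simp: matrix_unit_def)

lemma matvec_matrix_unit: "matvec (matrix_unit p q) x = (\<lambda>i. if i = p then x q else 0)"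
  unfolding matvec_def matrix_unit_row by (auto simp: suminf_single)

lemma bounded_matrix_matrix_unit: "bounded_matrix (matrix_unit p q)"
  unfolding bounded_matrix_def
proof (intro conjI ballI allI exI)
  fix x :: "nat \<Rightarrow> complex" and i
  show "summable (\<lambda>j. matrix_unit p q i j * x j)"
    unfolding matrix_unit_row by (rule summable_single)
  show "matvec (matrix_unit p q) x \<in> l2"
    unfolding matvec_matrix_unit by (rule single_in_l2)
next
  fix x :: "nat \<Rightarrow> complex" assume "x \<in> l2"
  then show "l2norm (matvec (matrix_unit p q) x) \<le> 1 * l2norm x"
    unfolding matvec_matrix_unit l2norm_single using cmod_le_l2norm by simp
qed

text \<open>Rank one: on a bounded sequence the image is a bounded sequence of multiples of
  \<open>e\<^sub>p\<close>, and Bolzano--Weierstrass in \<open>\<complex>\<close> supplies the Cauchy subsequence.\<close>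

lemma matrix_unit_in_KH: "matrix_unit p q \<in> KH"
proof -
  have "\<exists>r::nat \<Rightarrow> nat. strict_mono r \<and> (\<forall>e>0. \<exists>N. \<forall>m\<ge>N. \<forall>n\<ge>N.
          l2norm (\<lambda>i. matvec (matrix_unit p q) (s (r m)) i
                    - matvec (matrix_unit p q) (s (r n)) i) < e)"
    if s: "\<forall>n. s n \<in> l2 \<and> l2norm (s n) \<le> 1" for s
  proof -
    define z where "z = (\<lambda>n. s n q)"
    have "\<forall>y\<in>range z. norm y \<le> 1"
      using s cmod_le_l2norm z_def by (force intro: order_trans)
    then have "bounded (range z)" unfolding bounded_iff by blast
    then obtain l r where r: "strict_mono r" "(z \<circ> r) \<longlonglongrightarrow> l"
      using bounded_imp_convergent_subsequence by blast
    then have "Cauchy (z \<circ> r)" using LIMSEQ_imp_Cauchy by blast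
    then have "\<forall>e>0. \<exists>N. \<forall>m\<ge>N. \<forall>n\<ge>N. cmod (z (r m) - z (r n)) < e"
      unfolding Cauchy_def dist_norm by simp
    moreover have "(\<lambda>i. matvec (matrix_unit p q) (s (r m)) i - matvec (matrix_unit p q) (s (r n)) i)
        = (\<lambda>i. if i = p then z (r m) - z (r n) else 0)" for m n
      unfolding matvec_matrix_unit z_def by auto
    ultimately have "\<forall>e>0. \<exists>N. \<forall>m\<ge>N. \<forall>n\<ge>N. l2norm (\<lambda>i. matvec (matrix_unit p q) (s (r m)) i
                    - matvec (matrix_unit p q) (s (r n)) i) < e"
      by (simp only: l2norm_single)
    then show ?thesis using r(1) by blast
  qed
  then show ?thesis
    using bounded_matrix_matrix_unit unfolding KH_def compact_matrix_def by blast
qed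

lemma matmul_matrix_unit: "matmul (matrix_unit i k) (matrix_unit k j) = matrix_unit i j"
proof (intro ext)
  fix a b
  have "(\<lambda>l. matrix_unit i k a l * matrix_unit k j l b) = (\<lambda>l. if l = k then matrix_unit i j a b else 0)"
    by (auto simp: matrix_unit_def)
  then show "matmul (matrix_unit i k) (matrix_unit k j) a b = matrix_unit i j a b"
    unfolding matmul_def by (simp add: suminf_single)
qed

lemma matmul_schur_matrix_unit:
  "matmul (schur A (matrix_unit i k)) (schur A (matrix_unit k j)) i j = A i k * A k j"
proof -
  have "(\<lambda>l. schur A (matrix_unit i k) i l * schur A (matrix_unit k j) l j)
      = (\<lambda>l. if l = k then A i k * A k j else 0)"
    by (auto simp: schur_def matrix_unit_def)
  then show ?thesis unfolding matmul_def by (simp add: suminf_single)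
qed

lemma schur_multiplicative_imp_cocycle:
  assumes "\<forall>B\<in>KH. \<forall>C\<in>KH. schur A (matmul B C) = matmul (schur A B) (schur A C)"
  shows "A i k * A k j = A i j"
proof -
  have "schur A (matmul (matrix_unit i k) (matrix_unit k j)) i j
      = matmul (schur A (matrix_unit i k)) (schur A (matrix_unit k j)) i j"
    using assms matrix_unit_in_KH by simp
  then show ?thesis
    unfolding matmul_matrix_unit matmul_schur_matrix_unit by (simp add: schur_def matrix_unit_def)
qed

lemma cocycle_imp_proportional_columns:
  fixes A :: "nat \<Rightarrow> nat \<Rightarrow> 'a::field"
  assumes cocycle: "\<And>i k j. A i k * A k j = A i j"
    and nonzero: "A \<noteq> (\<lambda>i j. 0)"
  shows "(\<forall>j. \<exists>c. \<forall>i. A i j = c * A i 0) \<and> (\<forall>i. A i i = 1)"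
proof -
  have "A 0 0 \<noteq> 0"
  proof
    assume "A 0 0 = 0"
    then have "A i j = 0" for i j
      using cocycle[of i 0 j] cocycle[of i 0 0] by (metis mult_zero_left mult_zero_right)
    then show False using nonzero by blast
  qed
  moreover have "A 0 0 * A 0 0 = A 0 0 * 1"
    using cocycle[of 0 0 0] by simp
  ultimately have "A 0 0 = 1"
    by (rule mult_left_cancel[THEN iffD1])
  then have "A 0 i * A i 0 = 1" for i
    using cocycle[of 0 i 0] by simp
  then have "A i i = 1" for i
    using cocycle[of i 0 i] by (metis mult.commute)
  moreover have "A i j = A 0 j * A i 0" for i j
    using cocycle[of i 0 j] by (simp add: mult.commute)
  ultimately show ?thesis by blast
qed

lemma proportional_columns_imp_cocycle:
  fixes A :: "nat \<Rightarrow> nat \<Rightarrow> 'a::field"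
  assumes "\<forall>j. \<exists>c. \<forall>i. A i j = c * A i 0" and diag: "\<forall>i. A i i = 1"
  shows "A i k * A k j = A i j"
proof -
  obtain c where c: "\<And>i j. A i j = c j * A i 0"
    using assms(1) by (rule choice[THEN exE]) blast
  have d: "c i * A i 0 = 1" for i using diag c[of i i] by simp
  have "A i k * A k j = (c k * A k 0) * (c j * A i 0)"
    using c[of i k] c[of k j] by (simp add: ac_simps)
  also have "\<dots> = A i j" using d[of k] c[of i j] by (simp add: ac_simps)
  finally show ?thesis .
qed

lemma column_in_l2:
  assumes "bounded_matrix C"
  shows "(\<lambda>k. C k j) \<in> l2"
proof -
  have "(\<lambda>l. C k l * (if l = j then 1 else 0)) = (\<lambda>l. if l = j then C k j else 0)" for k
    by auto
  then have "matvec C (\<lambda>l. if l = j then 1 else 0) = (\<lambda>k. C k j)"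
    unfolding matvec_def by (simp add: suminf_single)
  moreover have "matvec C (\<lambda>l. if l = j then 1 else 0) \<in> l2"
    using assms single_in_l2[of j 1] unfolding bounded_matrix_def by blast
  ultimately show ?thesis by simp
qed

lemma summable_matmul_entry:
  assumes "bounded_matrix B" and "bounded_matrix C"
  shows "summable (\<lambda>k. B i k * C k j)"
  using assms(1) column_in_l2[OF assms(2)] unfolding bounded_matrix_def by simp

lemma cocycle_imp_schur_multiplicative:
  assumes cocycle: "\<And>i k j. A i k * A k j = A i j"
    and "bounded_matrix B" and "bounded_matrix C"
  shows "schur A (matmul B C) = matmul (schur A B) (schur A C)"
proof (intro ext)
  fix i j
  have "schur A B i k * schur A C k j = (A i k * A k j) * (B i k * C k j)" for k
    unfolding schur_def by (simp only: ac_simps)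
  then have "matmul (schur A B) (schur A C) i j = (\<Sum>k. A i j * (B i k * C k j))"
    unfolding matmul_def cocycle by simp
  also have "\<dots> = A i j * (\<Sum>k. B i k * C k j)"
    by (rule suminf_mult[OF summable_matmul_entry[OF assms(2,3)]])
  finally show "schur A (matmul B C) i j = matmul (schur A B) (schur A C) i j"
    by (simp add: schur_def matmul_def)
qed

theorem theorem4p3:
  fixes A :: "nat \<Rightarrow> nat \<Rightarrow> complex"
  assumes bounded: "\<exists>M. \<forall>i j. cmod (A i j) \<le> M"
    and maps: "\<forall>T\<in>KH. schur A T \<in> KH"
    and nonzero: "\<exists>T\<in>KH. schur A T \<noteq> (\<lambda>i j. 0)"
  shows "(\<forall>B\<in>KH. \<forall>C\<in>KH. schur A (matmul B C) = matmul (schur A B) (schur A C))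
     \<longleftrightarrow> ((\<forall>j. \<exists>c. \<forall>i. A i j = c * A i 0) \<and> (\<forall>i. A i i = 1))"
proof
  assume "\<forall>B\<in>KH. \<forall>C\<in>KH. schur A (matmul B C) = matmul (schur A B) (schur A C)"
  moreover have "A \<noteq> (\<lambda>i j. 0)"
    using nonzero by (auto simp: schur_def)
  ultimately show "(\<forall>j. \<exists>c. \<forall>i. A i j = c * A i 0) \<and> (\<forall>i. A i i = 1)"
    by (intro cocycle_imp_proportional_columns schur_multiplicative_imp_cocycle)
next
  assume "(\<forall>j. \<exists>c. \<forall>i. A i j = c * A i 0) \<and> (\<forall>i. A i i = 1)"
  then have cocycle: "\<And>i k j. A i k * A k j = A i j"
    using proportional_columns_imp_cocycle by blast
  show "\<forall>B\<in>KH. \<forall>C\<in>KH. schur A (matmul B C) = matmul (schur A B) (schur A C)"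
    using cocycle_imp_schur_multiplicative[OF cocycle] by (simp add: KH_def compact_matrix_def)
qed

end
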